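(* Let $k$ be a positive integer. Every $2^k$-$T_0T^\ast$-perfect number $n>1$ has the form $p_1^{2^{k+1}-1}$ for some prime $p_1$.
   Context: For a positive integer $m$, $T(m)$ denotes the product of all positive divisors of $m$, and $T^\ast(m)$ the product of all unitary divisors of $m$ (divisors $d$ with $\gcd(d,m/d)=1$). For an integer $K\ge 2$, an integer $n>1$ is called $K$-$T_0T^\ast$-perfect if $T(T^\ast(n))=n^K$. *)

theory Defs
  imports "HOL-Computational_Algebra.Primes"
begin

definition divisor_prod :: "nat \<Rightarrow> nat" where
  "divisor_prod m = (\<Prod>d\<in>{d. d dvd m}. d)"

definition unitary_divisor_prod :: "nat \<Rightarrow> nat" where
  "unitary_divisor_prod m = (\<Prod>d\<in>{d. d dvd m \<and> coprime d (m div d)}. d)"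

definition K_T0Tstar_perfect :: "nat \<Rightarrow> nat \<Rightarrow> bool" where
  "K_T0Tstar_perfect K n \<longleftrightarrow> n > 1 \<and> divisor_prod (unitary_divisor_prod n) = n ^ K"

end

theory Submission
  imports Defs
begin

text \<open>
  Pairing each divisor d with its complement n/d shows T(n)^2 = n^\<tau>(n), and likewise
  T*(n)^2 = n^\<tau>*(n) for the number \<tau>*(n) of unitary divisors. Hence T(T*(n)) = n^K forces
  \<tau>*(n) \<cdot> \<tau>(T*(n)) = 4K; for K = 2^k both factors are powers of two. If \<tau>*(n) \<ge> 4, then
  T*(n) = n^(\<tau>*(n)/2) is a perfect square greater than 1, so \<tau>(T*(n)) is odd and at least 2,
  which is impossible. Thus \<tau>*(n) = 2, i.e. n = p^a is a prime power, T*(n) = n, and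
  a + 1 = \<tau>(n) = 2^(k+1).
\<close>

lemma div_div_cancel_nat: "(d::nat) dvd m \<Longrightarrow> m > 0 \<Longrightarrow> m div (m div d) = d"
  by (metis div_div_eq_right dvd_refl div_self less_not_refl2 mult_1)

lemma prod_square_eq_power_card:
  fixes m :: nat and S :: "nat set"
  assumes m: "m > 0" and fin: "finite S"
    and dvd: "\<And>d. d \<in> S \<Longrightarrow> d dvd m" and closed: "\<And>d. d \<in> S \<Longrightarrow> m div d \<in> S"
  shows "(\<Prod>d\<in>S. d) ^ 2 = m ^ card S"
proof -
  have reindex: "(\<Prod>d\<in>S. m div d) = (\<Prod>d\<in>S. d)"
    by (rule prod.reindex_bij_witness[where i="\<lambda>d. m div d" and j="\<lambda>d. m div d"])
       (auto simp: div_div_cancel_nat dvd m closed)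
  have "(\<Prod>d\<in>S. d) ^ 2 = (\<Prod>d\<in>S. d) * (\<Prod>d\<in>S. m div d)"
    by (simp add: reindex power2_eq_square)
  also have "\<dots> = (\<Prod>d\<in>S. d * (m div d))"
    by (simp add: prod.distrib)
  also have "\<dots> = (\<Prod>d\<in>S. m)"
    by (rule prod.cong) (auto dest: dvd)
  finally show ?thesis by simp
qed

lemma divisor_prod_square: "m > 0 \<Longrightarrow> divisor_prod m ^ 2 = m ^ card {d. d dvd m}"
  unfolding divisor_prod_def
  by (rule prod_square_eq_power_card) auto

lemma two_le_card_divisors:
  assumes "(m::nat) > 1"
  shows "2 \<le> card {d. d dvd m}"
proof -
  have "card {1, m} \<le> card {d. d dvd m}"
    using assms by (intro card_mono finite_divisors_nat) auto
  with assms show ?thesis by simp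
qed

lemma card_divisors_prime_power:
  assumes p: "prime (p::nat)"
  shows "card {d. d dvd p ^ a} = Suc a"
proof -
  have "{d. d dvd p ^ a} = (\<lambda>i. p ^ i) ` {..a}"
    using divides_primepow_nat[OF p] by auto
  moreover have "inj_on (\<lambda>i. p ^ i) {..a}"
    using prime_gt_1_nat[OF p] by (auto simp: inj_on_def)
  ultimately show ?thesis
    by (simp add: card_image)
qed

lemma divisor_complement_gt_iff:
  fixes r d :: nat
  assumes r: "r > 0" and d: "d dvd r ^ 2"
  shows "r < r ^ 2 div d \<longleftrightarrow> d < r"
proof -
  define e where "e = r ^ 2 div d"
  have prod: "d * e = r * r"
    using d by (simp add: e_def power2_eq_square)
  then have "e > 0"
    using r by (auto intro!: gr0I)
  have "d < r" if "r < e"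
  proof (rule ccontr)
    assume "\<not> d < r"
    then have "r * r < d * e"
      using that r by (intro mult_le_less_imp_less) auto
    with prod show False by simp
  qed
  moreover have "r < e" if "d < r"
  proof (rule ccontr)
    assume "\<not> r < e"
    then have "d * e < r * r"
      using that \<open>e > 0\<close> by (intro mult_less_le_imp_less) auto
    with prod show False by simp
  qed
  ultimately show ?thesis
    unfolding e_def by blast
qed

text \<open>The divisors of a square come in pairs d, r^2/d, except for r itself.\<close>

lemma odd_card_divisors_square:
  fixes r :: nat
  assumes r: "r > 0"
  shows "odd (card {d. d dvd r ^ 2})"
proof -
  let ?m = "r ^ 2"
  let ?A = "{d. d dvd ?m \<and> d < r}" and ?B = "{d. d dvd ?m \<and> r < d}"
  have m: "?m > 0" using r by simp
  have fin: "finite {d. d dvd ?m}" using finite_divisors_nat[OF m] .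
  have complement_dvd: "?m div d dvd ?m" if "d dvd ?m" for d
    using that by (metis dvd_div_mult_self dvd_triv_left)
  have "bij_betw (\<lambda>d. ?m div d) ?A ?B"
  proof (rule bij_betw_byWitness[where f'="\<lambda>d. ?m div d"])
    show "\<forall>d\<in>?A. ?m div (?m div d) = d" "\<forall>d\<in>?B. ?m div (?m div d) = d"
      using div_div_cancel_nat[OF _ m] by blast+
    show "(\<lambda>d. ?m div d) ` ?A \<subseteq> ?B"
      using divisor_complement_gt_iff[OF r] complement_dvd by auto
    show "(\<lambda>d. ?m div d) ` ?B \<subseteq> ?A"
    proof (intro image_subsetI CollectI conjI)
      fix d assume "d \<in> ?B"
      then show "?m div d dvd ?m" and "?m div d < r"
        using complement_dvd divisor_complement_gt_iff[OF r, of "?m div d"]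
        by (auto simp: div_div_cancel_nat[OF _ m])
    qed
  qed
  then have same_card: "card ?A = card ?B"
    by (rule bij_betw_same_card)
  have finite_A: "finite ?A" and finite_B: "finite ?B"
    by (rule finite_subset[OF _ fin]; auto)+
  have split: "{d. d dvd ?m} = ?A \<union> {r} \<union> ?B"
    by auto
  have "card {d. d dvd ?m} = card ?A + 1 + card ?B"
    unfolding split using finite_A finite_B by (subst card_Un_disjoint; auto)+
  then show ?thesis
    using same_card by simp
qed

definition unitary_divisors :: "nat \<Rightarrow> nat set" where
  "unitary_divisors n = {d. d dvd n \<and> coprime d (n div d)}"

lemma unitary_divisor_prod_eq: "unitary_divisor_prod n = (\<Prod>d\<in>unitary_divisors n. d)"
  by (simp add: unitary_divisor_prod_def unitary_divisors_def)

lemma finite_unitary_divisors: "n > 0 \<Longrightarrow> finite (unitary_divisors n)"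
  unfolding unitary_divisors_def
  by (rule finite_subset[OF _ finite_divisors_nat]) auto

lemma unitary_divisors_complement:
  "n > 0 \<Longrightarrow> d \<in> unitary_divisors n \<Longrightarrow> n div d \<in> unitary_divisors n"
  by (auto simp: unitary_divisors_def div_div_cancel_nat coprime_commute)

lemma one_self_subset_unitary_divisors: "n > 0 \<Longrightarrow> {1, n} \<subseteq> unitary_divisors n"
  by (auto simp: unitary_divisors_def)

lemma two_le_card_unitary_divisors:
  assumes "n > 1"
  shows "2 \<le> card (unitary_divisors n)"
proof -
  have "card {1, n} \<le> card (unitary_divisors n)"
    using assms by (intro card_mono finite_unitary_divisors one_self_subset_unitary_divisors) auto
  with assms show ?thesis by simp
qed

lemma unitary_divisor_prod_square:
  assumes n: "n > 0"
  shows "unitary_divisor_prod n ^ 2 = n ^ card (unitary_divisors n)"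
  unfolding unitary_divisor_prod_eq
proof (rule prod_square_eq_power_card[OF n finite_unitary_divisors[OF n]])
  fix d assume d: "d \<in> unitary_divisors n"
  then show "d dvd n"
    by (simp add: unitary_divisors_def)
  from n d show "n div d \<in> unitary_divisors n"
    by (rule unitary_divisors_complement)
qed

lemma unitary_divisor_prod_eq_power:
  assumes "n > 0" and "card (unitary_divisors n) = 2 * e"
  shows "unitary_divisor_prod n = n ^ e"
proof -
  have "unitary_divisor_prod n ^ 2 = (n ^ e) ^ 2"
    using unitary_divisor_prod_square[OF assms(1)] assms(2)
    by (simp add: power_mult[symmetric] mult.commute)
  then show ?thesis
    by (rule power_eq_imp_eq_base) auto
qed

lemma prime_power_multiplicity_in_unitary_divisors:
  assumes p: "prime p" and n: "n > 0"
  shows "p ^ multiplicity p n \<in> unitary_divisors n"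
proof -
  have "\<not> p dvd n div p ^ multiplicity p n"
    using multiplicity_decompose[of n p] n p prime_gt_1_nat[OF p] by auto
  then have "coprime (p ^ multiplicity p n) (n div p ^ multiplicity p n)"
    using p by (simp add: coprime_commute prime_imp_coprime)
  then show ?thesis
    by (simp add: unitary_divisors_def multiplicity_dvd)
qed

lemma prime_power_if_card_unitary_divisors_eq_2:
  assumes n: "n > 1" and card2: "card (unitary_divisors n) = 2"
  obtains p a where "prime p" "n = p ^ a"
proof -
  have "{1, n} = unitary_divisors n"
    using n card2
    by (intro card_subset_eq finite_unitary_divisors one_self_subset_unitary_divisors) auto
  then have U: "unitary_divisors n = {1, n}" ..
  obtain p where p: "prime p" "p dvd n"
    using prime_factor_nat[of n] n by auto
  define a where "a = multiplicity p n"
  have "a > 0"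
    unfolding a_def using p n by (simp add: prime_multiplicity_gt_zero_iff)
  then have "p ^ a \<noteq> 1"
    using prime_gt_1_nat[OF p(1)] by simp
  moreover have "p ^ a \<in> unitary_divisors n"
    unfolding a_def using p(1) n by (intro prime_power_multiplicity_in_unitary_divisors) simp_all
  ultimately have "n = p ^ a"
    using U by blast
  with p that show thesis by blast
qed

lemma K_T0Tstar_perfect_card_product:
  assumes "K_T0Tstar_perfect K n"
  shows "card (unitary_divisors n) * card {d. d dvd unitary_divisor_prod n} = 4 * K"
proof -
  define m where "m = unitary_divisor_prod n"
  define u where "u = card (unitary_divisors n)"
  define t where "t = card {d. d dvd m}"
  have n: "n > 1" and T: "divisor_prod m = n ^ K"
    using assms by (auto simp: K_T0Tstar_perfect_def m_def)
  have m_square: "m ^ 2 = n ^ u"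
    using unitary_divisor_prod_square n by (simp add: m_def u_def)
  then have "m > 0"
    using n by (metis gr0I not_one_less_zero power_not_zero zero_power2)
  have "n ^ (u * t) = (m ^ 2) ^ t"
    by (simp add: m_square power_mult)
  also have "\<dots> = (m ^ t) ^ 2"
    by (simp add: power_mult[symmetric] mult.commute)
  also have "\<dots> = (divisor_prod m ^ 2) ^ 2"
    by (simp add: divisor_prod_square[OF \<open>m > 0\<close>] t_def)
  also have "\<dots> = n ^ (4 * K)"
    by (simp add: T power_mult[symmetric] ac_simps)
  finally show ?thesis
    using power_inject_exp[OF n] by (simp add: m_def u_def t_def)
qed

lemma card_unitary_divisors_eq_2:
  assumes n: "n > 1"
    and u: "card (unitary_divisors n) = 2 ^ j"
    and t: "card {d. d dvd unitary_divisor_prod n} = 2 ^ i"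
  shows "card (unitary_divisors n) = 2"
proof (rule ccontr)
  assume "card (unitary_divisors n) \<noteq> 2"
  have "j \<noteq> 0"
    using u two_le_card_unitary_divisors[OF n] by (cases j) auto
  moreover have "j \<noteq> 1"
    using u \<open>card (unitary_divisors n) \<noteq> 2\<close> by auto
  ultimately obtain l where "j = Suc (Suc l)"
    by (metis One_nat_def not0_implies_Suc)
  then have "card (unitary_divisors n) = 2 * (2 * 2 ^ l)"
    using u by simp
  then have "unitary_divisor_prod n = n ^ (2 * 2 ^ l)"
    using n by (intro unitary_divisor_prod_eq_power) simp_all
  also have "\<dots> = (n ^ 2 ^ l) ^ 2"
    by (simp add: power_mult[symmetric] mult.commute)
  finally have square: "unitary_divisor_prod n = (n ^ 2 ^ l) ^ 2" .
  have "odd (card {d. d dvd unitary_divisor_prod n})"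
    unfolding square using n by (intro odd_card_divisors_square) simp
  moreover have "2 \<le> card {d. d dvd unitary_divisor_prod n}"
    unfolding square using n by (intro two_le_card_divisors one_less_power) simp_all
  ultimately show False
    using t by (cases i) simp_all
qed

theorem mainTheorem10:
  fixes k n :: nat
  assumes "k \<ge> 1"
    and "n > 1"
    and "K_T0Tstar_perfect (2 ^ k) n"
  shows "\<exists>p. prime p \<and> n = p ^ (2 ^ (k + 1) - 1)"
proof -
  let ?u = "card (unitary_divisors n)" and ?t = "card {d. d dvd unitary_divisor_prod n}"
  have ut: "?u * ?t = 2 ^ (k + 2)"
    using K_T0Tstar_perfect_card_product[OF assms(3)] by (simp add: power_add)
  have "?u dvd 2 ^ (k + 2)" "?t dvd 2 ^ (k + 2)"
    unfolding ut[symmetric] by simp_all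
  then obtain j i where "?u = 2 ^ j" "?t = 2 ^ i"
    using divides_primepow_nat[OF two_is_prime_nat] by blast
  then have u: "?u = 2"
    by (rule card_unitary_divisors_eq_2[OF assms(2)])
  then obtain p a where p: "prime p" and n: "n = p ^ a"
    using prime_power_if_card_unitary_divisors_eq_2[OF assms(2)] by blast
  have "unitary_divisor_prod n = n"
    using unitary_divisor_prod_eq_power[of n 1] u assms(2) by simp
  then have "?t = Suc a"
    by (simp add: n card_divisors_prime_power[OF p])
  with ut u have "2 * Suc a = 2 * 2 ^ (k + 1)"
    by simp
  then have "a = 2 ^ (k + 1) - 1"
    by simp
  with p n show ?thesis by blast
qed

end
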